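(* Fix $m\ge1$ and consider the game for SumLoss with top-1 feedback and binary relevance, with loss matrix $L$ as in the context. Then every learner action $\sigma_i$, $i\in[m!]$, is Pareto-optimal.
   Context: Objects are $\{1,\dots,m\}$. Learner actions are the permutations $\sigma_1,\dots,\sigma_{m!}$ of $[m]$ ($\sigma(i)$ = rank of object $i$); adversary actions are the relevance vectors $r_1,\dots,r_{2^m}$ enumerating $\{0,1\}^m$. The loss matrix $L\in\mathbb{R}^{m!\times 2^m}$ has $L_{i,j}=\sum_{k=1}^m\sigma_i(k)r_j(k)$, with rows $\ell_i\in\mathbb{R}^{2^m}$. Let $\Delta=\{p\in\mathbb{R}^{2^m}:p_i\ge0,\sum_ip_i=1\}$. Action $i$ is optimal under $p\in\Delta$ if $\ell_i\cdot p\le\ell_j\cdot p$ for all $j$. The cell of action $i$ is $C_i=\{p\in\Delta: \text{action } i \text{ is optimal under } p\}$. Action $i$ is Pareto-optimal if $C_i$ is non-empty and $(2^m-1)$-dimensional. *)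

theory Defs
  imports "HOL-Analysis.Analysis"
begin

text \<open>Objects are the elements of a finite type 'n (m = CARD('n)).
 A learner action is a ranking sigma : 'n -> {1..m}, bijective (sigma i = rank of object i).
 Adversary actions are relevance vectors r : 'n -> bool, i.e. elements of {0,1}^m.\<close>

definition rankings :: "('n::finite \<Rightarrow> nat) set" where
  "rankings = {\<sigma>. bij_betw \<sigma> UNIV {1..CARD('n)}}"

definition loss_row :: "('n::finite \<Rightarrow> nat) \<Rightarrow> real ^ ('n \<Rightarrow> bool)" where
  "loss_row \<sigma> = (\<chi> r. \<Sum>k\<in>UNIV. real (\<sigma> k) * (if r k then 1 else 0))"

definition prob_simplex :: "(real ^ ('n::finite \<Rightarrow> bool)) set" where
  "prob_simplex = {p. (\<forall>r. 0 \<le> p $ r) \<and> (\<Sum>r\<in>UNIV. p $ r) = 1}"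

definition cell :: "('n::finite \<Rightarrow> nat) \<Rightarrow> (real ^ ('n \<Rightarrow> bool)) set" where
  "cell \<sigma> = {p \<in> prob_simplex. \<forall>\<tau>\<in>rankings. loss_row \<sigma> \<bullet> p \<le> loss_row \<tau> \<bullet> p}"

definition pareto_optimal :: "('n::finite \<Rightarrow> nat) \<Rightarrow> bool" where
  "pareto_optimal \<sigma> \<longleftrightarrow> cell \<sigma> \<noteq> {} \<and> aff_dim (cell \<sigma>) = int (2 ^ CARD('n)) - 1"

end

theory Submission
  imports Defs
begin

text \<open>Under a distribution p the expected loss of a ranking \<tau> is the sum of \<tau>(k) q(k), where q(k)
  is the probability that object k is relevant. Put half of the mass uniformly on {0,1}^m and the
  other half equally on the m nested relevance vectors "rank under \<sigma> at most j"; then every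
  coordinate is positive and q(k) is a strictly decreasing affine function of \<sigma>(k). By the
  rearrangement inequality \<sigma> is then the unique optimal ranking, so by continuity \<sigma> remains
  optimal on a neighbourhood of this point in the hyperplane of total mass 1. Hence the cell
  of \<sigma> has full dimension 2^m - 1.\<close>

lemma ranking_range:
  fixes \<tau> :: "'n::finite \<Rightarrow> nat"
  assumes "\<tau> \<in> rankings"
  shows "\<tau> k \<in> {1..CARD('n)}"
  using assms unfolding rankings_def bij_betw_def by auto

lemma sum_ranking_reindex:
  fixes \<tau> :: "'n::finite \<Rightarrow> nat"
  assumes "\<tau> \<in> rankings"
  shows "(\<Sum>k\<in>UNIV. g (\<tau> k)) = (\<Sum>i\<in>{1..CARD('n)}. g i)"
  using assms unfolding rankings_def by (simp add: sum.reindex_bij_betw)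

lemma finite_rankings: "finite (rankings :: ('n::finite \<Rightarrow> nat) set)"
proof (rule finite_subset)
  show "rankings \<subseteq> Pi\<^sub>E (UNIV::'n set) (\<lambda>_. {1..CARD('n)})"
    using ranking_range[where 'n='n] by (auto simp: PiE_UNIV_domain)
qed (auto intro: finite_PiE)

lemma inner_ranking_less:
  fixes \<tau> \<sigma> :: "'n::finite \<Rightarrow> nat"
  assumes "\<tau> \<in> rankings" "\<sigma> \<in> rankings" "\<tau> \<noteq> \<sigma>"
  shows "(\<Sum>k\<in>UNIV. real (\<tau> k) * real (\<sigma> k)) < (\<Sum>k\<in>UNIV. real (\<sigma> k) * real (\<sigma> k))"
proof -
  obtain k0 where k0: "\<tau> k0 \<noteq> \<sigma> k0" using assms(3) by auto
  have "0 < (\<Sum>k\<in>UNIV. (real (\<sigma> k) - real (\<tau> k))^2)"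
    by (rule sum_pos2[of UNIV k0]) (use k0 in auto)
  also have "\<dots> = (\<Sum>k\<in>UNIV. real (\<sigma> k) * real (\<sigma> k)) - 2 * (\<Sum>k\<in>UNIV. real (\<tau> k) * real (\<sigma> k))
      + (\<Sum>k\<in>UNIV. real (\<tau> k) * real (\<tau> k))"
    by (simp add: power2_eq_square algebra_simps sum.distrib sum_subtractf sum_distrib_left)
  also have "(\<Sum>k\<in>UNIV. real (\<tau> k) * real (\<tau> k)) = (\<Sum>k\<in>UNIV. real (\<sigma> k) * real (\<sigma> k))"
    using sum_ranking_reindex[OF assms(1), of "\<lambda>i. real i * real i"]
      sum_ranking_reindex[OF assms(2), of "\<lambda>i. real i * real i"]
    by simp
  finally show ?thesis by simp
qed

definition relevance_prob :: "real ^ ('n::finite \<Rightarrow> bool) \<Rightarrow> 'n \<Rightarrow> real" where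
  "relevance_prob p k = (\<Sum>r | r k. p $ r)"

lemma inner_loss_row: "loss_row \<tau> \<bullet> p = (\<Sum>k\<in>UNIV. real (\<tau> k) * relevance_prob p k)"
proof -
  have "loss_row \<tau> \<bullet> p = (\<Sum>r\<in>UNIV. (\<Sum>k\<in>UNIV. real (\<tau> k) * (if r k then 1 else 0)) * p $ r)"
    by (simp add: loss_row_def inner_vec_def)
  also have "\<dots> = (\<Sum>r\<in>UNIV. \<Sum>k\<in>UNIV. real (\<tau> k) * (if r k then p $ r else 0))"
    by (auto simp: sum_distrib_right intro!: sum.cong)
  also have "\<dots> = (\<Sum>k\<in>UNIV. real (\<tau> k) * (\<Sum>r\<in>UNIV. if r k then p $ r else 0))"
    by (subst sum.swap) (simp add: sum_distrib_left)
  finally show ?thesis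
    by (simp add: relevance_prob_def sum.If_cases)
qed

lemma strictly_optimal_if_relevance_prob_affine:
  fixes \<sigma> \<tau> :: "'n::finite \<Rightarrow> nat"
  assumes "\<sigma> \<in> rankings" "\<tau> \<in> rankings" "\<tau> \<noteq> \<sigma>" "b > 0"
    and "\<And>k. relevance_prob p k = a - b * real (\<sigma> k)"
  shows "loss_row \<sigma> \<bullet> p < loss_row \<tau> \<bullet> p"
proof -
  have loss: "loss_row \<rho> \<bullet> p = a * (\<Sum>i\<in>{1..CARD('n)}. real i)
      - b * (\<Sum>k\<in>UNIV. real (\<rho> k) * real (\<sigma> k))" if "\<rho> \<in> rankings" for \<rho>
  proof -
    have "loss_row \<rho> \<bullet> p = (\<Sum>k\<in>UNIV. a * real (\<rho> k) - b * (real (\<rho> k) * real (\<sigma> k)))"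
      by (simp add: inner_loss_row assms(5) algebra_simps)
    also have "\<dots> = a * (\<Sum>k\<in>UNIV. real (\<rho> k)) - b * (\<Sum>k\<in>UNIV. real (\<rho> k) * real (\<sigma> k))"
      by (simp add: sum_subtractf sum_distrib_left)
    finally show ?thesis
      using sum_ranking_reindex[OF that, of real] by simp
  qed
  show ?thesis
    using loss[OF assms(1)] loss[OF assms(2)] inner_ranking_less[OF assms(2,1,3)] assms(4)
    by simp
qed

lemma aff_dim_eq_if_open_slice:
  fixes S H U :: "'a::euclidean_space set"
  assumes "convex H" "open U" "H \<inter> U \<noteq> {}" "H \<inter> U \<subseteq> S" "S \<subseteq> H"
  shows "aff_dim S = aff_dim H"
  using aff_dim_convex_Int_open[OF assms(1-3)] aff_dim_subset[OF assms(4)] aff_dim_subset[OF assms(5)]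
  by linarith

lemma pareto_optimal_if_strictly_optimal_interior:
  fixes \<sigma> :: "'n::finite \<Rightarrow> nat"
  assumes pos: "\<And>r. 0 < p $ r" and total: "(\<Sum>r\<in>UNIV. p $ r) = 1"
    and strict: "\<And>\<tau>. \<tau> \<in> rankings \<Longrightarrow> \<tau> \<noteq> \<sigma> \<Longrightarrow> loss_row \<sigma> \<bullet> p < loss_row \<tau> \<bullet> p"
  shows "pareto_optimal \<sigma>"
proof -
  define one :: "real ^ ('n \<Rightarrow> bool)" where "one = (\<chi> r. 1)"
  have one_inner: "one \<bullet> x = (\<Sum>r\<in>UNIV. x $ r)" for x
    by (simp add: one_def inner_vec_def)
  have "one \<noteq> 0"
    unfolding one_def by (metis vec_lambda_beta zero_index zero_neq_one)
  define H where "H = {x. one \<bullet> x = 1}"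
  define U where "U = (\<Inter>r. {x::real ^ ('n \<Rightarrow> bool). 0 < x $ r}) \<inter>
      (\<Inter>\<tau>\<in>rankings - {\<sigma>}. {x. loss_row \<sigma> \<bullet> x < loss_row \<tau> \<bullet> x})"
  have "open U"
    unfolding U_def
    by (intro open_Int open_INT ballI finite_Diff finite_rankings finite_UNIV open_Collect_less
        continuous_intros) auto
  moreover have "p \<in> H \<inter> U"
    unfolding H_def U_def using pos strict total one_inner by auto
  moreover have "H \<inter> U \<subseteq> cell \<sigma>"
    unfolding H_def U_def cell_def prob_simplex_def
    using one_inner by (auto simp: less_imp_le) (metis Diff_iff empty_iff insert_iff order.refl less_imp_le)
  moreover have "cell \<sigma> \<subseteq> H"
    unfolding H_def cell_def prob_simplex_def using one_inner by auto
  ultimately have "aff_dim (cell \<sigma>) = aff_dim H" and "cell \<sigma> \<noteq> {}"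
    by (auto intro!: aff_dim_eq_if_open_slice simp: H_def convex_hyperplane)
  moreover have "aff_dim H = int (2 ^ CARD('n)) - 1"
    using \<open>one \<noteq> 0\<close> by (simp add: H_def card_fun)
  ultimately show ?thesis
    unfolding pareto_optimal_def by simp
qed

lemma card_relevant: "2 * card {r :: 'n::finite \<Rightarrow> bool. r k} = CARD('n \<Rightarrow> bool)"
proof -
  have "bij_betw (\<lambda>r x. \<not> r x) {r :: 'n \<Rightarrow> bool. r k} {r. \<not> r k}"
    by (rule bij_betwI[where g = "\<lambda>r x. \<not> r x"]) auto
  then have "card {r :: 'n \<Rightarrow> bool. \<not> r k} = card {r. r k}"
    by (simp add: bij_betw_same_card)
  moreover have "CARD('n \<Rightarrow> bool) = card {r :: 'n \<Rightarrow> bool. r k} + card {r. \<not> r k}"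
    by (subst card_Un_disjoint[symmetric]) (auto intro: arg_cong[where f = card])
  ultimately show ?thesis by simp
qed

definition nested_distribution :: "('n::finite \<Rightarrow> nat) \<Rightarrow> real ^ ('n \<Rightarrow> bool)" where
  "nested_distribution \<sigma> = (\<chi> r. 1 / (2 * real CARD('n \<Rightarrow> bool))
      + (\<Sum>j\<in>{1..CARD('n)}. if r = (\<lambda>k. \<sigma> k \<le> j) then 1 / (2 * real CARD('n)) else 0))"

lemma nested_distribution_pos:
  fixes \<sigma> :: "'n::finite \<Rightarrow> nat"
  shows "0 < nested_distribution \<sigma> $ r"
proof -
  have "0 \<le> (\<Sum>j\<in>{1..CARD('n)}. if r = (\<lambda>k. \<sigma> k \<le> j) then 1 / (2 * real CARD('n)) else 0)"
    by (intro sum_nonneg) auto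
  then show ?thesis
    by (simp add: nested_distribution_def add_pos_nonneg)
qed

lemma sum_nested_distribution: "(\<Sum>r\<in>UNIV. nested_distribution \<sigma> $ r) = 1"
  by (simp add: nested_distribution_def sum.distrib sum.swap[where A = UNIV])

lemma relevance_prob_nested_distribution:
  fixes \<sigma> :: "'n::finite \<Rightarrow> nat"
  assumes "\<sigma> \<in> rankings"
  shows "relevance_prob (nested_distribution \<sigma>) k = 1/4 + (real CARD('n) + 1 - real (\<sigma> k)) / (2 * real CARD('n))"
proof -
  have "relevance_prob (nested_distribution \<sigma>) k
      = (\<Sum>r | r k. 1 / (2 * real CARD('n \<Rightarrow> bool)))
        + (\<Sum>r | r k. \<Sum>j\<in>{1..CARD('n)}. if r = (\<lambda>k. \<sigma> k \<le> j) then 1 / (2 * real CARD('n)) else 0)"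
    by (simp add: relevance_prob_def nested_distribution_def sum.distrib)
  also have "(\<Sum>r | r k. 1 / (2 * real CARD('n \<Rightarrow> bool))) = 1/4"
    using card_relevant[of k] by (simp add: field_simps)
  also have "(\<Sum>r | r k. \<Sum>j\<in>{1..CARD('n)}. if r = (\<lambda>k. \<sigma> k \<le> j) then 1 / (2 * real CARD('n)) else 0)
      = (\<Sum>j\<in>{1..CARD('n)}. if \<sigma> k \<le> j then 1 / (2 * real CARD('n)) else 0)"
    by (subst sum.swap) (simp add: sum.delta)
  also have "\<dots> = (\<Sum>j\<in>{\<sigma> k..CARD('n)}. 1 / (2 * real CARD('n)))"
    using ranking_range[OF assms, of k] by (intro sum.mono_neutral_cong_right) auto
  also have "\<dots> = (real CARD('n) + 1 - real (\<sigma> k)) / (2 * real CARD('n))"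
    using ranking_range[OF assms, of k] by (simp add: of_nat_diff)
  finally show ?thesis .
qed

theorem lemma1:
  fixes \<sigma> :: "'n::finite \<Rightarrow> nat"
  assumes "\<sigma> \<in> rankings"
  shows "pareto_optimal \<sigma>"
proof (rule pareto_optimal_if_strictly_optimal_interior)
  let ?m = "real CARD('n)"
  show "0 < nested_distribution \<sigma> $ r" for r
    by (rule nested_distribution_pos)
  show "(\<Sum>r\<in>UNIV. nested_distribution \<sigma> $ r) = 1"
    by (rule sum_nested_distribution)
  show "loss_row \<sigma> \<bullet> nested_distribution \<sigma> < loss_row \<tau> \<bullet> nested_distribution \<sigma>"
    if "\<tau> \<in> rankings" "\<tau> \<noteq> \<sigma>" for \<tau>
  proof (rule strictly_optimal_if_relevance_prob_affine[OF assms that])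
    show "0 < 1 / (2 * ?m)" by simp
    show "relevance_prob (nested_distribution \<sigma>) k
        = (1/4 + (?m + 1) / (2 * ?m)) - 1 / (2 * ?m) * real (\<sigma> k)" for k
      using relevance_prob_nested_distribution[OF assms, of k] by (simp add: diff_divide_distrib)
  qed
qed

end
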